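(* Let $\mathcal A$ be a transitive Lie algebroid with kernel $\mathcal L$ and let $\mathring\omega\in\Omega^1(\mathcal A,\mathcal L)$ be a background connection, i.e. a 1-form with $\mathring\omega\circ\iota=-\mathrm{Id}_{\mathcal L}$. For every (generalized) connection $\widehat\omega\in\Omega^1(\mathcal A,\mathcal L)$ with reduced kernel endomorphism $\tau=\widehat\omega\circ\iota+\mathrm{Id}_{\mathcal L}$, the 1-form $$\omega=\widehat\omega+\tau\circ\mathring\omega$$ is the connection 1-form of an ordinary connection on $\mathcal A$. Moreover, when $\widehat\omega$ undergoes the infinitesimal gauge transformation by $\xi\in\mathcal L$ (with $\mathring\omega$ fixed), the induced transformation of $\omega$ is the infinitesimal gauge transformation of ordinary connections, $\omega\mapsto\omega+\hat d\xi+[\omega,\xi]$ (to first order in $\xi$).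
   Context: A transitive Lie algebroid over $M$: finitely generated projective $C^\infty(M)$-module $\mathcal A$ with Lie bracket and surjective $C^\infty(M)$-linear Lie morphism $\rho:\mathcal A\to\Gamma(TM)$, $[X,fY]=f[X,Y]+(\rho(X)f)Y$; kernel $\mathcal L=\ker\rho$ (sections of a Lie algebra bundle), inclusion $\iota$. $\Omega^1(\mathcal A,\mathcal L)$: $C^\infty(M)$-linear maps $\mathcal A\to\mathcal L$; for $\xi\in\mathcal L$, $(\hat d\xi)(X)=[X,\iota\xi]$ viewed in $\mathcal L$. A (generalized) connection is any $\widehat\omega\in\Omega^1(\mathcal A,\mathcal L)$, with infinitesimal gauge transformation $\widehat\omega^\xi=\widehat\omega+\hat d\xi+[\widehat\omega,\xi]$ ($[\widehat\omega,\xi](X)=[\widehat\omega(X),\xi]$), and the induced transformation of $\tau$ is $\tau\mapsto\tau+[\tau,\xi]$. An ordinary connection is a $C^\infty(M)$-linear splitting $\nabla:\Gamma(TM)\to\mathcal A$ of $\rho$; its 1-form $\omega$ is defined by $X=\nabla_{\rho(X)}-\iota\omega(X)$, and these 1-forms are exactly those with $\omega\circ\iota=-\mathrm{Id}_{\mathcal L}$. *)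

theory Defs
  imports Complex_Main
begin

text \<open>Algebraic (Lie--Rinehart) model of a transitive Lie algebroid.
  The ring C^infinity(M) is modelled by a commutative real algebra of type 'r,
  vector fields Gamma(TM) by the real-linear derivations of 'r (Gamma(TM) = Der(C^infinity(M))),
  the module of sections of the algebroid by a real vector space of type 'a with a
  C^infinity(M)-action sA, a Lie bracket br and an anchor rho.\<close>

definition is_derivation :: "('r::{real_algebra_1,comm_ring_1} \<Rightarrow> 'r) \<Rightarrow> bool" where
  "is_derivation D \<longleftrightarrow>
     (\<forall>f g. D (f + g) = D f + D g) \<and>
     (\<forall>c f. D (c *\<^sub>R f) = c *\<^sub>R D f) \<and>
     (\<forall>f g. D (f * g) = f * D g + g * D f)"

definition is_module_action :: "('r::{real_algebra_1,comm_ring_1} \<Rightarrow> 'a::real_vector \<Rightarrow> 'a) \<Rightarrow> bool" where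
  "is_module_action sA \<longleftrightarrow>
     (\<forall>f g X. sA (f * g) X = sA f (sA g X)) \<and>
     (\<forall>X. sA 1 X = X) \<and>
     (\<forall>f g X. sA (f + g) X = sA f X + sA g X) \<and>
     (\<forall>f X Y. sA f (X + Y) = sA f X + sA f Y) \<and>
     (\<forall>c X. sA (of_real c) X = c *\<^sub>R X)"

text \<open>Finitely generated projective: dual basis characterisation
  X = sum_i phi_i(X) e_i with C^infinity(M)-linear phi_i.\<close>
definition fin_gen_projective :: "('r::{real_algebra_1,comm_ring_1} \<Rightarrow> 'a::real_vector \<Rightarrow> 'a) \<Rightarrow> bool" where
  "fin_gen_projective sA \<longleftrightarrow>
     (\<exists>n::nat. \<exists>e::nat \<Rightarrow> 'a. \<exists>\<phi>::nat \<Rightarrow> 'a \<Rightarrow> 'r.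
        (\<forall>i<n. (\<forall>X Y. \<phi> i (X + Y) = \<phi> i X + \<phi> i Y) \<and> (\<forall>f X. \<phi> i (sA f X) = f * \<phi> i X)) \<and>
        (\<forall>X. X = (\<Sum>i<n. sA (\<phi> i X) (e i))))"

definition is_Lie_bracket :: "('a::real_vector \<Rightarrow> 'a \<Rightarrow> 'a) \<Rightarrow> bool" where
  "is_Lie_bracket br \<longleftrightarrow>
     (\<forall>X Y Z. br (X + Y) Z = br X Z + br Y Z) \<and>
     (\<forall>c X Y. br (c *\<^sub>R X) Y = c *\<^sub>R br X Y) \<and>
     (\<forall>X Y. br X Y = - br Y X) \<and>
     (\<forall>X Y Z. br X (br Y Z) = br (br X Y) Z + br Y (br X Z))"

definition transitive_Lie_algebroid ::
  "('r::{real_algebra_1,comm_ring_1} \<Rightarrow> 'a::real_vector \<Rightarrow> 'a) \<Rightarrow> ('a \<Rightarrow> 'a \<Rightarrow> 'a) \<Rightarrow> ('a \<Rightarrow> 'r \<Rightarrow> 'r) \<Rightarrow> bool" where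
  "transitive_Lie_algebroid sA br \<rho> \<longleftrightarrow>
     is_module_action sA \<and> fin_gen_projective sA \<and> is_Lie_bracket br \<and>
     (\<forall>X. is_derivation (\<rho> X)) \<and>
     (\<forall>X Y. \<rho> (X + Y) = (\<lambda>g. \<rho> X g + \<rho> Y g)) \<and>
     (\<forall>f X. \<rho> (sA f X) = (\<lambda>g. f * \<rho> X g)) \<and>
     (\<forall>X Y. \<rho> (br X Y) = (\<lambda>g. \<rho> X (\<rho> Y g) - \<rho> Y (\<rho> X g))) \<and>
     (\<forall>D. is_derivation D \<longrightarrow> (\<exists>X. \<rho> X = D)) \<and>
     (\<forall>X Y f. br X (sA f Y) = sA f (br X Y) + sA (\<rho> X f) Y)"

text \<open>The kernel L = ker rho; the inclusion iota is the identity on L.\<close>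
definition kernel :: "('a \<Rightarrow> 'r::{real_algebra_1,comm_ring_1} \<Rightarrow> 'r) \<Rightarrow> 'a set" where
  "kernel \<rho> = {X. \<rho> X = (\<lambda>g. 0)}"

definition is_one_form ::
  "('r::{real_algebra_1,comm_ring_1} \<Rightarrow> 'a::real_vector \<Rightarrow> 'a) \<Rightarrow> ('a \<Rightarrow> 'r \<Rightarrow> 'r) \<Rightarrow> ('a \<Rightarrow> 'a) \<Rightarrow> bool" where
  "is_one_form sA \<rho> \<theta> \<longleftrightarrow>
     (\<forall>X Y. \<theta> (X + Y) = \<theta> X + \<theta> Y) \<and>
     (\<forall>f X. \<theta> (sA f X) = sA f (\<theta> X)) \<and>
     (\<forall>X. \<theta> X \<in> kernel \<rho>)"

definition is_ordinary_connection ::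
  "('r::{real_algebra_1,comm_ring_1} \<Rightarrow> 'a::real_vector \<Rightarrow> 'a) \<Rightarrow> ('a \<Rightarrow> 'r \<Rightarrow> 'r) \<Rightarrow> (('r \<Rightarrow> 'r) \<Rightarrow> 'a) \<Rightarrow> bool" where
  "is_ordinary_connection sA \<rho> Nb \<longleftrightarrow>
     (\<forall>D1 D2. is_derivation D1 \<longrightarrow> is_derivation D2 \<longrightarrow> Nb (\<lambda>g. D1 g + D2 g) = Nb D1 + Nb D2) \<and>
     (\<forall>f D. is_derivation D \<longrightarrow> Nb (\<lambda>g. f * D g) = sA f (Nb D)) \<and>
     (\<forall>D. is_derivation D \<longrightarrow> \<rho> (Nb D) = D)"

definition is_connection_form_of ::
  "('a::real_vector \<Rightarrow> 'r::{real_algebra_1,comm_ring_1} \<Rightarrow> 'r) \<Rightarrow> (('r \<Rightarrow> 'r) \<Rightarrow> 'a) \<Rightarrow> ('a \<Rightarrow> 'a) \<Rightarrow> bool" where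
  "is_connection_form_of \<rho> Nb \<omega> \<longleftrightarrow> (\<forall>X. X = Nb (\<rho> X) - \<omega> X)"

definition hat_d :: "('a \<Rightarrow> 'a \<Rightarrow> 'a) \<Rightarrow> 'a \<Rightarrow> ('a \<Rightarrow> 'a)" where
  "hat_d br \<xi> = (\<lambda>X. br X \<xi>)"

definition gauge :: "('a::real_vector \<Rightarrow> 'a \<Rightarrow> 'a) \<Rightarrow> ('a \<Rightarrow> 'a) \<Rightarrow> 'a \<Rightarrow> ('a \<Rightarrow> 'a)" where
  "gauge br \<theta> \<xi> = (\<lambda>X. \<theta> X + hat_d br \<xi> X + br (\<theta> X) \<xi>)"

definition red_tau :: "('a::real_vector \<Rightarrow> 'a) \<Rightarrow> ('a \<Rightarrow> 'a)" where
  "red_tau \<omega>h = (\<lambda>l. \<omega>h l + l)"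

definition omega_of :: "('a::real_vector \<Rightarrow> 'a) \<Rightarrow> ('a \<Rightarrow> 'a) \<Rightarrow> ('a \<Rightarrow> 'a)" where
  "omega_of \<omega>0 \<omega>h = (\<lambda>X. \<omega>h X + red_tau \<omega>h (\<omega>0 X))"

end

theory Submission
  imports Defs
begin

text \<open>Write \<open>\<omega> = \<omega>h + \<omega>h \<circ> \<omega>0 + \<omega>0\<close>. Since \<open>\<omega>0\<close> and \<open>\<omega>h\<close> are \<open>C\<^sup>\<infinity>(M)\<close>-linear with values
  in the kernel, so is \<open>\<omega>\<close>; and \<open>\<omega>0 l = -l\<close> on the kernel gives \<open>\<omega> l = -l\<close> there.
  Any such 1-form comes from an ordinary connection: \<open>X + \<omega> X\<close> depends only on the anchor
  \<open>\<rho> X\<close>, and \<open>\<nabla>\<^sub>D := X + \<omega> X\<close> for any \<open>X\<close> with \<open>\<rho> X = D\<close> splits the anchor.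
  The gauge behaviour is exact, not merely first order: \<open>\<omega>\<close> depends affinely on \<open>\<omega>h\<close>
  and the bracket is additive in its first argument.\<close>

lemma kernel_add:
  assumes "transitive_Lie_algebroid sA br \<rho>" "X \<in> kernel \<rho>" "Y \<in> kernel \<rho>"
  shows "X + Y \<in> kernel \<rho>"
  using assms by (auto simp: transitive_Lie_algebroid_def kernel_def)

lemma kernel_diff_of_same_anchor:
  assumes "transitive_Lie_algebroid sA br \<rho>" "\<rho> X = \<rho> Y"
  shows "X - Y \<in> kernel \<rho>"
proof -
  have "\<rho> X = (\<lambda>g. \<rho> Y g + \<rho> (X - Y) g)"
    using assms(1) unfolding transitive_Lie_algebroid_def by (metis add.commute diff_add_cancel)
  with assms(2) show ?thesis by (simp add: kernel_def fun_eq_iff)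
qed

lemma one_form_additive:
  assumes "is_one_form sA \<rho> \<theta>"
  shows "additive \<theta>"
  using assms by (simp add: is_one_form_def additive_def)

lemma one_form_add:
  assumes "transitive_Lie_algebroid sA br \<rho>" "is_one_form sA \<rho> \<theta>" "is_one_form sA \<rho> \<eta>"
  shows "is_one_form sA \<rho> (\<lambda>X. \<theta> X + \<eta> X)"
proof -
  have "sA f (X + Y) = sA f X + sA f Y" for f X Y
    using assms(1) by (simp add: transitive_Lie_algebroid_def is_module_action_def)
  with assms show ?thesis
    by (auto simp: is_one_form_def algebra_simps intro: kernel_add)
qed

lemma one_form_comp:
  assumes "is_one_form sA \<rho> \<theta>" "is_one_form sA \<rho> \<eta>"
  shows "is_one_form sA \<rho> (\<theta> \<circ> \<eta>)"
  using assms by (simp add: is_one_form_def)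

lemma omega_of_eq: "omega_of \<omega>0 \<omega>h X = \<omega>h X + \<omega>h (\<omega>0 X) + \<omega>0 X"
  by (simp add: omega_of_def red_tau_def add.assoc)

lemma one_form_omega_of:
  assumes "transitive_Lie_algebroid sA br \<rho>" "is_one_form sA \<rho> \<omega>0" "is_one_form sA \<rho> \<omega>h"
  shows "is_one_form sA \<rho> (omega_of \<omega>0 \<omega>h)"
proof -
  have "omega_of \<omega>0 \<omega>h = (\<lambda>X. \<omega>h X + (\<omega>h \<circ> \<omega>0) X + \<omega>0 X)"
    by (simp add: fun_eq_iff omega_of_eq)
  then show ?thesis
    by (simp only:) (intro one_form_add[OF assms(1)] one_form_comp assms(2,3))
qed

lemma omega_of_on_kernel:
  assumes "is_one_form sA \<rho> \<omega>h" "\<forall>l\<in>kernel \<rho>. \<omega>0 l = - l" "l \<in> kernel \<rho>"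
  shows "omega_of \<omega>0 \<omega>h l = - l"
  using assms by (simp add: omega_of_eq additive.minus[OF one_form_additive])

lemma connection_form_anchor_invariant:
  assumes "transitive_Lie_algebroid sA br \<rho>" "is_one_form sA \<rho> \<omega>"
    and "\<forall>l\<in>kernel \<rho>. \<omega> l = - l" "\<rho> X = \<rho> Y"
  shows "X + \<omega> X = Y + \<omega> Y"
proof -
  have "\<omega> (X - Y) = - (X - Y)"
    using assms kernel_diff_of_same_anchor by blast
  then show ?thesis
    by (simp add: additive.diff[OF one_form_additive[OF assms(2)]] algebra_simps)
qed

lemma ordinary_connection_of_form:
  fixes sA :: "'r::{real_algebra_1,comm_ring_1} \<Rightarrow> 'a::real_vector \<Rightarrow> 'a"
  assumes alg: "transitive_Lie_algebroid sA br \<rho>" and form: "is_one_form sA \<rho> \<omega>"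
    and on_kernel: "\<forall>l\<in>kernel \<rho>. \<omega> l = - l"
  shows "\<exists>Nb. is_ordinary_connection sA \<rho> Nb \<and> is_connection_form_of \<rho> Nb \<omega>"
proof -
  have \<rho>_add: "\<rho> (X + Y) = (\<lambda>g. \<rho> X g + \<rho> Y g)"
    and \<rho>_scale: "\<rho> (sA f X) = (\<lambda>g. f * \<rho> X g)"
    and \<rho>_onto: "is_derivation D \<Longrightarrow> \<exists>X. \<rho> X = D"
    and sA_add: "sA f (X + Y) = sA f X + sA f Y" for X Y f D
    using alg by (auto simp: transitive_Lie_algebroid_def is_module_action_def)
  have \<omega>_add: "\<omega> (X + Y) = \<omega> X + \<omega> Y" and \<omega>_scale: "\<omega> (sA f X) = sA f (\<omega> X)"
    and \<omega>_kernel: "\<omega> X \<in> kernel \<rho>" for X Y f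
    using form by (auto simp: is_one_form_def)
  define Nb where "Nb D = (SOME X. \<rho> X = D) + \<omega> (SOME X. \<rho> X = D)" for D
  have Nb: "Nb (\<rho> X) = X + \<omega> X" for X
    unfolding Nb_def
    by (rule connection_form_anchor_invariant[OF alg form on_kernel]) (rule someI, rule refl)
  have "is_ordinary_connection sA \<rho> Nb"
    unfolding is_ordinary_connection_def
  proof (intro conjI allI impI)
    fix D1 D2 :: "'r \<Rightarrow> 'r" assume "is_derivation D1" "is_derivation D2"
    then obtain X1 X2 where X: "\<rho> X1 = D1" "\<rho> X2 = D2" using \<rho>_onto by blast
    then have "Nb (\<lambda>g. D1 g + D2 g) = Nb (\<rho> (X1 + X2))"
      by (simp only: \<rho>_add)
    also have "\<dots> = (X1 + \<omega> X1) + (X2 + \<omega> X2)"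
      by (simp only: Nb \<omega>_add ac_simps)
    finally show "Nb (\<lambda>g. D1 g + D2 g) = Nb D1 + Nb D2"
      by (simp only: X[symmetric] Nb)
  next
    fix f and D :: "'r \<Rightarrow> 'r" assume "is_derivation D"
    then obtain X where X: "\<rho> X = D" using \<rho>_onto by blast
    then have "Nb (\<lambda>g. f * D g) = Nb (\<rho> (sA f X))"
      by (simp only: \<rho>_scale)
    also have "\<dots> = sA f (X + \<omega> X)"
      by (simp only: Nb \<omega>_scale sA_add)
    finally show "Nb (\<lambda>g. f * D g) = sA f (Nb D)"
      by (simp only: X[symmetric] Nb)
  next
    fix D :: "'r \<Rightarrow> 'r" assume "is_derivation D"
    then obtain X where X: "\<rho> X = D" using \<rho>_onto by blast
    have "\<rho> (X + \<omega> X) = \<rho> X"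
      using \<omega>_kernel[of X] by (simp add: \<rho>_add kernel_def)
    then show "\<rho> (Nb D) = D"
      by (simp only: X[symmetric] Nb)
  qed
  moreover have "is_connection_form_of \<rho> Nb \<omega>"
    by (simp add: is_connection_form_of_def Nb)
  ultimately show ?thesis by blast
qed

lemma omega_of_gauge:
  assumes "is_Lie_bracket br"
  shows "omega_of \<omega>0 (gauge br \<omega>h \<xi>) = gauge br (omega_of \<omega>0 \<omega>h) \<xi>"
proof
  have br_add: "br (X + Y) Z = br X Z + br Y Z" for X Y Z
    using assms unfolding is_Lie_bracket_def by blast
  show "omega_of \<omega>0 (gauge br \<omega>h \<xi>) X = gauge br (omega_of \<omega>0 \<omega>h) \<xi> X" for X
    unfolding omega_of_eq gauge_def hat_d_def br_add by (simp only: ac_simps)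
qed

theorem theorem3p4:
  fixes sA :: "'r::{real_algebra_1,comm_ring_1} \<Rightarrow> 'a::real_vector \<Rightarrow> 'a"
    and br :: "'a \<Rightarrow> 'a \<Rightarrow> 'a"
    and \<rho> :: "'a \<Rightarrow> 'r \<Rightarrow> 'r"
    and \<omega>0 \<omega>h :: "'a \<Rightarrow> 'a"
  assumes "transitive_Lie_algebroid sA br \<rho>"
    and "is_one_form sA \<rho> \<omega>0"
    and "\<forall>l\<in>kernel \<rho>. \<omega>0 l = - l"
    and "is_one_form sA \<rho> \<omega>h"
  shows "is_one_form sA \<rho> (omega_of \<omega>0 \<omega>h) \<and>
         (\<exists>Nb. is_ordinary_connection sA \<rho> Nb \<and> is_connection_form_of \<rho> Nb (omega_of \<omega>0 \<omega>h)) \<and>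
         (\<forall>\<xi>\<in>kernel \<rho>. omega_of \<omega>0 (gauge br \<omega>h \<xi>) = gauge br (omega_of \<omega>0 \<omega>h) \<xi>)"
proof (intro conjI ballI)
  show form: "is_one_form sA \<rho> (omega_of \<omega>0 \<omega>h)"
    using assms(1,2,4) by (rule one_form_omega_of)
  have "\<forall>l\<in>kernel \<rho>. omega_of \<omega>0 \<omega>h l = - l"
    using assms(3,4) omega_of_on_kernel by blast
  then show "\<exists>Nb. is_ordinary_connection sA \<rho> Nb \<and> is_connection_form_of \<rho> Nb (omega_of \<omega>0 \<omega>h)"
    by (rule ordinary_connection_of_form[OF assms(1) form])
  fix \<xi> show "omega_of \<omega>0 (gauge br \<omega>h \<xi>) = gauge br (omega_of \<omega>0 \<omega>h) \<xi>"
    using assms(1) unfolding transitive_Lie_algebroid_def by (blast intro: omega_of_gauge)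
qed

end
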